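(* Let $\mathbb{Z}_{(p)}\langle t\rangle$ be the subring of $\mathbb{Z}_{(p)}[[t]]$ consisting of series $\sum_{i\ge0}c_it^i$ with $c_i\to0$ $p$-adically as $i\to\infty$. Define \[ f(z,t) := \frac{E_p(zt)E_p(t^p)}{E_p(t)E_p(zt^p)}\in\mathbb{Z}_{(p)}[[t,1-z]]. \] Then $f(z,t)\in z+(t-1)\,\mathbb{Z}_{(p)}\langle t\rangle[[1-z]]$.
   Context: $p$ is a prime. The Artin–Hasse exponential is $E_p(t)=\exp\left(\sum_{i\ge0}t^{p^i}/p^i\right)$; it is known that $E_p(t)\in\mathbb{Z}_{(p)}[[t]]$ (with constant term $1$), so the quotient defining $f$ makes sense in $\mathbb{Z}_{(p)}[[t,1-z]]$, writing $z = 1-(1-z)$. *)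

theory Defs
  imports "HOL-Computational_Algebra.Computational_Algebra"
begin

definition Zp :: "nat \<Rightarrow> rat set" where
  "Zp p = {q. \<not> int p dvd snd (quotient_of q)}"

definition AH_log :: "nat \<Rightarrow> rat fps" where
  "AH_log p = Abs_fps (\<lambda>n. if (\<exists>i. n = p ^ i) then 1 / of_nat n else 0)"

definition artin_hasse :: "nat \<Rightarrow> rat fps" where
  "artin_hasse p = fps_exp 1 oo AH_log p"

text \<open>Bivariate series in t (outer variable) and w = 1 - z (inner variable):
  type rat fps fps, where (F $ i) $ j is the coefficient of t^i w^j.
  subst_tm a c m is the series a(c * t^m), for a univariate a(t) and c in Q[[w]].\<close>
definition subst_tm :: "rat fps \<Rightarrow> rat fps \<Rightarrow> nat \<Rightarrow> rat fps fps" where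
  "subst_tm a c m = Abs_fps (\<lambda>n. if m dvd n then fps_const (a $ (n div m)) * c ^ (n div m) else 0)"

definition zvar :: "rat fps" where
  "zvar = 1 - fps_X"

definition f_AH :: "nat \<Rightarrow> rat fps fps" where
  "f_AH p = subst_tm (artin_hasse p) zvar 1 * subst_tm (artin_hasse p) 1 p *
      inverse (subst_tm (artin_hasse p) 1 1 * subst_tm (artin_hasse p) zvar p)"

text \<open>g lies in Z_(p)<t>[[w]]: all coefficients in Z_(p), and for every fixed
  power w^j, the t-coefficients tend to 0 p-adically.\<close>
definition in_Zp_tate_pow :: "nat \<Rightarrow> rat fps fps \<Rightarrow> bool" where
  "in_Zp_tate_pow p g \<longleftrightarrow>
     (\<forall>i j. (g $ i) $ j \<in> Zp p) \<and>
     (\<forall>j k. \<forall>\<^sub>F i in sequentially. \<exists>r \<in> Zp p. (g $ i) $ j = of_nat (p ^ k) * r)"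

end

theory Submission
  imports Defs "HOL-Number_Theory.Number_Theory"
begin

text \<open>Write \<open>L(t) = \<Sum>\<^sub>i t\<^bsup>p\<^sup>i\<^esup>/p\<^sup>i\<close>, so \<open>f = exp A\<close> with
  \<open>A(z,t) = L(zt) + L(t\<^sup>p) - L(t) - L(zt\<^sup>p)\<close>. For each power of \<open>w = 1 - z\<close>, the
  \<open>t\<close>-coefficients of \<open>A\<close> have telescoping partial sums \<open>((1 - w)\<^bsup>p\<^sup>K\<^esup> - 1)/p\<^sup>K\<close>,
  which converge \<open>p\<close>-adically to \<open>log(1 - w) = log z\<close>. Summation at \<open>t = 1\<close> commutes with
  sums and products, and \<open>exp A\<close> is \<open>w\<close>-adically a polynomial in \<open>A\<close>, so the \<open>t\<close>-coefficients
  of \<open>f\<close> sum \<open>p\<close>-adically to \<open>exp (log z) = z\<close>. Dwork's equation \<open>E\<^sub>p(t\<^sup>p) = E\<^sub>p(t)\<^sup>p e\<^bsup>-pt\<^esup>\<close>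
  and \<open>F(t)\<^sup>p \<equiv> F(t\<^sup>p) mod p\<close> show inductively that \<open>E\<^sub>p\<close>, hence \<open>f\<close>, has coefficients
  in \<open>\<int>\<^sub>(\<^sub>p\<^sub>)\<close>. Then \<open>(f - z)/(t - 1)\<close> has as \<open>t\<^sup>i\<close>-coefficients the negated remainders
  \<open>\<Sum>\<^bsub>m\<le>i\<^esub> f\<^sub>m - z\<close>, which lie in \<open>\<int>\<^sub>(\<^sub>p\<^sub>)\<close> and tend to \<open>0\<close>.\<close>

lemma fps_ode_unique:
  fixes Y W C :: "'a::{idom, semiring_char_0} fps"
  assumes "fps_deriv Y = C * Y" "fps_deriv W = C * W" "Y $ 0 = W $ 0"
  shows "Y = W"
proof (rule fps_ext)
  fix n show "Y $ n = W $ n"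
  proof (induction n rule: less_induct)
    case (less n)
    show ?case
    proof (cases n)
      case 0 thus ?thesis using assms(3) by simp
    next
      case (Suc m)
      have "of_nat (Suc m) * Y $ Suc m = (C * Y) $ m"
        using arg_cong[OF assms(1), of "\<lambda>f. f $ m"] by simp
      also have "\<dots> = (C * W) $ m"
        unfolding fps_mult_nth using less Suc by (intro sum.cong) auto
      also have "\<dots> = of_nat (Suc m) * W $ Suc m"
        using arg_cong[OF assms(2), of "\<lambda>f. f $ m"] by simp
      finally show ?thesis using Suc by (simp del: of_nat_Suc)
    qed
  qed
qed

lemma fps_exp_compose_add:
  fixes A B :: "'a::field_char_0 fps"
  assumes "A $ 0 = 0" "B $ 0 = 0"
  shows "fps_exp 1 oo (A + B) = (fps_exp 1 oo A) * (fps_exp 1 oo B)"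
proof (rule fps_ode_unique)
  have "(A + B) $ 0 = 0" using assms by simp
  thus "fps_deriv (fps_exp 1 oo (A + B)) = (fps_deriv A + fps_deriv B) * (fps_exp 1 oo (A + B))"
    by (simp add: fps_compose_deriv mult.commute)
  show "fps_deriv ((fps_exp 1 oo A) * (fps_exp 1 oo B))
      = (fps_deriv A + fps_deriv B) * ((fps_exp 1 oo A) * (fps_exp 1 oo B))"
    by (simp add: fps_compose_deriv assms algebra_simps)
qed simp

lemma fps_of_nat_mult_nth: "(of_nat n * f) $ j = of_nat n * f $ j"
  by (simp add: fps_of_nat[symmetric])

lemma fps_exp_compose_of_nat_mult:
  fixes A :: "'a::field_char_0 fps"
  assumes "A $ 0 = 0"
  shows "fps_exp 1 oo (of_nat n * A) = (fps_exp 1 oo A) ^ n"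
proof (induction n)
  case (Suc n)
  have "fps_exp 1 oo (A + of_nat n * A) = (fps_exp 1 oo A) * (fps_exp 1 oo (of_nat n * A))"
    using assms by (intro fps_exp_compose_add) (simp_all add: fps_of_nat_mult_nth)
  thus ?case using Suc by (simp add: algebra_simps)
qed simp

lemma fps_compose_monom_nth:
  fixes a :: "'a::comm_ring_1 fps"
  assumes "m \<ge> 1"
  shows "(a oo (fps_const c * fps_X ^ m)) $ n
    = (if m dvd n then a $ (n div m) * c ^ (n div m) else 0)"
proof -
  have "(a oo (fps_const c * fps_X ^ m)) $ n
      = (\<Sum>i=0..n. if i = n div m \<and> m dvd n then a $ i * c ^ i else 0)"
    unfolding fps_compose_nth power_mult_distrib fps_const_power power_mult[symmetric]
    using assms by (intro sum.cong refl) auto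
  thus ?thesis by (simp add: sum.delta' div_le_dividend)
qed

lemma fps_mult_nth_of_vanishing_below:
  fixes H Z :: "'a::comm_semiring_0 fps"
  assumes "\<And>i. i < n \<Longrightarrow> H $ i = 0"
  shows fps_mult_nth_below: "j < n \<Longrightarrow> (Z * H) $ j = 0"
    and fps_mult_nth_at: "(Z * H) $ n = Z $ 0 * H $ n"
  using assms unfolding fps_mult_nth
  by (auto intro!: sum.neutral simp: sum.mono_neutral_right[of "{0..n}" "{0}"])

lemma power_Suc_add_expansion:
  fixes F H :: "'a::comm_ring_1"
  shows "\<exists>Q. (F + H) ^ Suc k = F ^ Suc k + of_nat (Suc k) * F ^ k * H + H * H * Q"
proof (induction k)
  case (Suc k)
  then obtain Q where "(F + H) ^ Suc k = F ^ Suc k + of_nat (Suc k) * F ^ k * H + H * H * Q"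
    by blast
  hence "(F + H) ^ Suc (Suc k) = F ^ Suc (Suc k) + of_nat (Suc (Suc k)) * F ^ Suc k * H
      + H * H * (F * Q + of_nat (Suc k) * F ^ k + H * Q)"
    by (simp add: algebra_simps)
  thus ?case by blast
qed (intro exI[of _ 0], simp)

lemma fps_power_nth_cutoff:
  fixes G :: "'a::comm_ring_1 fps"
  assumes "G $ 0 = 1" "n > 0"
  shows "j < n \<Longrightarrow> (G ^ m) $ j = (fps_cutoff n G ^ m) $ j"
    and "(G ^ m) $ n = (fps_cutoff n G ^ m) $ n + of_nat m * G $ n"
proof -
  define F H where "F = fps_cutoff n G" and "H = G - fps_cutoff n G"
  have H: "\<And>i. i < n \<Longrightarrow> H $ i = 0" and Hn: "H $ n = G $ n" by (simp_all add: H_def)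
  have "\<exists>D. G ^ m = F ^ m + (of_nat m * F ^ (m - 1)) * H + D * H * H"
  proof (cases m)
    case (Suc k)
    then obtain Q where "(F + H) ^ Suc k = F ^ Suc k + of_nat (Suc k) * F ^ k * H + H * H * Q"
      using power_Suc_add_expansion by blast
    thus ?thesis unfolding Suc by (intro exI[of _ Q]) (simp add: F_def H_def mult_ac)
  qed (intro exI[of _ 0], simp)
  then obtain D where D: "G ^ m = F ^ m + (of_nat m * F ^ (m - 1)) * H + (D * H) * H" by blast
  have below: "(Z * H) $ j = 0" if "j < n" for Z j
    using fps_mult_nth_below[of n H j Z] H that by blast
  have at: "(Z * H) $ n = Z $ 0 * H $ n" for Z
    using fps_mult_nth_at[of n H Z] H by blast
  have "(D * H) $ 0 = 0" "F $ 0 = 1" using H assms by (simp_all add: F_def)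
  thus "j < n \<Longrightarrow> (G ^ m) $ j = (F ^ m) $ j"
    and "(G ^ m) $ n = (F ^ m) $ n + of_nat m * G $ n"
    unfolding D by (simp_all add: below at Hn fps_of_nat_mult_nth fps_power_zeroth)
qed

lemma fps_mult_partial_sum:
  "(\<Sum>n\<le>N. (c * d :: 'a::comm_ring_1 fps) $ n) = (\<Sum>i\<le>N. c $ i * (\<Sum>j\<le>N - i. d $ j))"
proof (induction N)
  case 0 thus ?case by (simp add: fps_mult_nth)
next
  case (Suc N)
  have "(\<Sum>i\<le>N. c $ i * (\<Sum>j\<le>Suc N - i. d $ j))
       = (\<Sum>i\<le>N. c $ i * (\<Sum>j\<le>N - i. d $ j)) + (\<Sum>i\<le>N. c $ i * d $ (Suc N - i))"
    by (subst sum.distrib[symmetric], intro sum.cong) (auto simp: Suc_diff_le algebra_simps)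
  thus ?case using Suc by (simp add: fps_mult_nth atLeast0AtMost)
qed

lemma fps_X_minus_1_mult_ones: "(fps_X - 1) * Abs_fps (\<lambda>_. 1 :: 'a::comm_ring_1) = - 1"
proof (rule fps_ext)
  fix n show "((fps_X - 1) * Abs_fps (\<lambda>_. 1 :: 'a)) $ n = (- 1 :: 'a fps) $ n"
    by (cases n) (simp_all add: algebra_simps)
qed

lemma fps_mult_ones_nth: "(h * Abs_fps (\<lambda>_. 1)) $ i = (\<Sum>a\<le>i. h $ a :: 'a::comm_ring_1)"
  by (simp add: fps_mult_nth atLeast0AtMost)

lemma fps_mult_inverse_eq_1:
  fixes F :: "'a::field fps fps"
  assumes "F $ 0 = 1"
  shows "F * inverse F = 1"
proof -
  have "inverse F = fps_right_inverse F (inverse (F $ 0))" by (simp add: fps_inverse_def)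
  hence "inverse F = fps_right_inverse F 1" using assms by simp
  thus ?thesis using fps_right_inverse[of F 1] assms by simp
qed

lemma zvar_power_nth: "(zvar ^ n) $ j = (-1) ^ j * of_nat (n choose j)"
proof (induction n arbitrary: j)
  case (Suc n)
  have "zvar ^ Suc n = zvar ^ n - fps_X * zvar ^ n" by (simp add: zvar_def algebra_simps)
  hence "(zvar ^ Suc n) $ j = (zvar ^ n) $ j - (if j = 0 then 0 else (zvar ^ n) $ (j - 1))"
    by simp
  thus ?case using Suc by (cases j) (auto simp: algebra_simps)
qed simp

lemma Suc_times_binomial_Suc: "Suc k * (N choose Suc k) = (N - k) * (N choose k)"
proof (cases N)
  case (Suc N')
  thus ?thesis using Suc_times_binomial[of k N'] binomial_absorb_comp[of N k] by simp
qed simp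

section \<open>The local ring \<open>\<int>\<^sub>(\<^sub>p\<^sub>)\<close> and divisibility by powers of \<open>p\<close>\<close>

locale padic =
  fixes p :: nat
  assumes prime: "prime p"
begin

lemma p_gt_1: "p > 1"
  using prime prime_gt_1_nat by blast

lemma Zp_iff: "q \<in> Zp p \<longleftrightarrow> (\<exists>a b. b \<noteq> 0 \<and> \<not> int p dvd b \<and> q = of_int a / of_int b)"
proof
  assume "q \<in> Zp p"
  obtain n d where nd: "quotient_of q = (n, d)" by (cases "quotient_of q")
  have "d > 0" using quotient_of_denom_pos[OF nd] .
  moreover have "q = of_int n / of_int d" using quotient_of_div[OF nd] .
  moreover have "\<not> int p dvd d" using \<open>q \<in> Zp p\<close> nd by (simp add: Zp_def)
  ultimately show "\<exists>a b. b \<noteq> 0 \<and> \<not> int p dvd b \<and> q = of_int a / of_int b"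
    by (intro exI[of _ n] exI[of _ d]) auto
next
  assume "\<exists>a b. b \<noteq> 0 \<and> \<not> int p dvd b \<and> q = of_int a / of_int b"
  then obtain a b where ab: "b \<noteq> 0" "\<not> int p dvd b" "q = of_int a / of_int b" by auto
  obtain n d where nd: "quotient_of q = (n, d)" by (cases "quotient_of q")
  have "of_int n / of_int d = (of_int a / of_int b :: rat)"
    using quotient_of_div[OF nd] ab(3) by simp
  hence "of_int (n * b) = (of_int (a * d) :: rat)"
    using quotient_of_denom_pos[OF nd] ab(1) by (simp add: field_simps)
  hence "d dvd n * b" by (metis dvd_triv_right of_int_eq_iff)
  hence "d dvd b"
    using quotient_of_coprime[OF nd] by (simp add: coprime_dvd_mult_right_iff coprime_commute)
  hence "\<not> int p dvd d" using ab(2) dvd_trans by blast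
  thus "q \<in> Zp p" by (simp add: Zp_def nd)
qed

lemma Zp_intro: "b \<noteq> 0 \<Longrightarrow> \<not> int p dvd b \<Longrightarrow> of_int a / of_int b \<in> Zp p"
  using Zp_iff by blast

lemma Zp_of_int [simp]: "of_int a \<in> Zp p"
  using Zp_intro[of 1 a] p_gt_1 by simp

lemma Zp_of_nat [simp]: "of_nat a \<in> Zp p"
  using Zp_of_int[of "int a"] by simp

lemma Zp_0 [simp]: "0 \<in> Zp p" and Zp_1 [simp]: "1 \<in> Zp p"
  using Zp_of_int[of 0] Zp_of_int[of 1] by simp_all

lemma
  assumes "x \<in> Zp p" "y \<in> Zp p"
  shows Zp_add [intro]: "x + y \<in> Zp p" and Zp_mult [intro]: "x * y \<in> Zp p"
proof -
  obtain a b where ab: "b \<noteq> 0" "\<not> int p dvd b" "x = of_int a / of_int b"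
    using assms(1) Zp_iff by blast
  obtain c d where cd: "d \<noteq> 0" "\<not> int p dvd d" "y = of_int c / of_int d"
    using assms(2) Zp_iff by blast
  have bd: "b * d \<noteq> 0" "\<not> int p dvd b * d" using ab cd prime by (auto simp: prime_dvd_mult_iff)
  have "x + y = of_int (a * d + c * b) / of_int (b * d)" "x * y = of_int (a * c) / of_int (b * d)"
    using ab cd by (simp_all add: field_simps)
  thus "x + y \<in> Zp p" "x * y \<in> Zp p" using Zp_intro[OF bd] by (simp_all only:)
qed

lemma Zp_uminus [intro]: "x \<in> Zp p \<Longrightarrow> - x \<in> Zp p"
  using Zp_mult[OF Zp_of_int[of "-1"]] by simp

lemma Zp_diff [intro]: "x \<in> Zp p \<Longrightarrow> y \<in> Zp p \<Longrightarrow> x - y \<in> Zp p"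
  using Zp_add[of x "- y"] by auto

lemma Zp_sum [intro]: "(\<And>i. i \<in> A \<Longrightarrow> f i \<in> Zp p) \<Longrightarrow> sum f A \<in> Zp p"
  by (induction A rule: infinite_finite_induct) auto

lemma Zp_power [intro]: "x \<in> Zp p \<Longrightarrow> x ^ n \<in> Zp p"
  by (induction n) auto

lemma Zp_divide_nat:
  assumes "x \<in> Zp p" "\<not> p dvd u" shows "x / of_nat u \<in> Zp p"
proof -
  have "of_int 1 / of_int (int u) \<in> Zp p" using assms(2) by (intro Zp_intro) (auto intro: Nat.gr0I)
  from Zp_mult[OF assms(1) this] show ?thesis by simp
qed

definition pow_dvd :: "nat \<Rightarrow> rat \<Rightarrow> bool" where
  "pow_dvd k q \<longleftrightarrow> (\<exists>r \<in> Zp p. q = of_nat (p ^ k) * r)"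

lemma pow_dvd_0_iff: "pow_dvd 0 q \<longleftrightarrow> q \<in> Zp p"
  by (simp add: pow_dvd_def)

lemma pow_dvd_zero [simp]: "pow_dvd k 0"
  by (auto simp: pow_dvd_def intro!: bexI[of _ 0])

lemma pow_dvd_p_power_mult: "x \<in> Zp p \<Longrightarrow> pow_dvd k (of_nat (p ^ k) * x)"
  by (auto simp: pow_dvd_def)

lemma pow_dvd_add: "pow_dvd k x \<Longrightarrow> pow_dvd k y \<Longrightarrow> pow_dvd k (x + y)"
  unfolding pow_dvd_def by (metis Zp_add distrib_left)

lemma pow_dvd_uminus: "pow_dvd k x \<Longrightarrow> pow_dvd k (- x)"
  unfolding pow_dvd_def by (auto intro!: bexI[of _ "- _"])

lemma pow_dvd_diff: "pow_dvd k x \<Longrightarrow> pow_dvd k y \<Longrightarrow> pow_dvd k (x - y)"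
  using pow_dvd_add[of k x "- y"] pow_dvd_uminus[of k y] by simp

lemma pow_dvd_sum: "(\<And>i. i \<in> A \<Longrightarrow> pow_dvd k (f i)) \<Longrightarrow> pow_dvd k (sum f A)"
  by (induction A rule: infinite_finite_induct) (auto intro: pow_dvd_add)

lemma pow_dvd_mult_Zp: "pow_dvd k x \<Longrightarrow> y \<in> Zp p \<Longrightarrow> pow_dvd k (x * y)"
  unfolding pow_dvd_def by (auto intro!: bexI[of _ "_ * y"])

lemma pow_dvd_mono: "pow_dvd k x \<Longrightarrow> k' \<le> k \<Longrightarrow> pow_dvd k' x"
  unfolding pow_dvd_def
  by (metis (no_types, lifting) Zp_mult Zp_of_nat le_add_diff_inverse mult.assoc of_nat_mult
      power_add)

lemma pow_dvd_1_p_mult: "x \<in> Zp p \<Longrightarrow> pow_dvd 1 (of_nat p * x)"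
  using pow_dvd_p_power_mult[of x 1] by simp

lemma Zp_if_pow_dvd_1_p_mult: "pow_dvd 1 (of_nat p * x) \<Longrightarrow> x \<in> Zp p"
  unfolding pow_dvd_def using p_gt_1 by auto

lemma pow_dvd_divide_nat:
  assumes "pow_dvd a x" "m \<ge> 1" "m < p ^ E" "E \<le> a"
  shows "pow_dvd (a - E) (x / of_nat m)"
proof -
  define v where "v = multiplicity p m"
  obtain u where u: "m = p ^ v * u" "\<not> p dvd u"
    using multiplicity_decompose'[of m p] assms(2) prime unfolding v_def
    by (metis not_prime_unit not_one_le_zero)
  have "p ^ v \<le> m" using u assms(2) by (metis dvd_imp_le dvd_triv_left not_one_le_zero neq0_conv)
  hence vE: "v < E" using assms(3) power_less_imp_less_exp p_gt_1 by (meson le_less_trans)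
  obtain r where r: "r \<in> Zp p" "x = of_nat (p ^ a) * r"
    using assms(1) unfolding pow_dvd_def by blast
  have "x / of_nat m = of_nat (p ^ (a - E)) * (of_nat (p ^ (E - v)) * r / of_nat u)"
  proof -
    have "a = (a - E) + (E - v) + v" using vE assms(4) by simp
    hence "(of_nat (p ^ a) :: rat) = of_nat (p ^ (a - E)) * of_nat (p ^ (E - v)) * of_nat (p ^ v)"
      by (metis power_add of_nat_mult)
    moreover have "(of_nat m :: rat) = of_nat (p ^ v) * of_nat u" using u by (metis of_nat_mult)
    ultimately show ?thesis using r(2) u assms(2) p_gt_1 by (simp add: field_simps)
  qed
  moreover have "of_nat (p ^ (E - v)) * r / of_nat u \<in> Zp p"
    using r(1) u(2) by (intro Zp_divide_nat Zp_mult) auto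
  ultimately show ?thesis unfolding pow_dvd_def by blast
qed

definition bounded_denom :: "nat \<Rightarrow> rat \<Rightarrow> bool" where
  "bounded_denom M q \<longleftrightarrow> of_nat (p ^ M) * q \<in> Zp p"

lemma bounded_denom_mono: "bounded_denom M q \<Longrightarrow> M \<le> M' \<Longrightarrow> bounded_denom M' q"
  unfolding bounded_denom_def
  using Zp_mult[OF Zp_of_nat[of "p ^ (M' - M)"], of "of_nat (p ^ M) * q"]
  by (simp add: mult.assoc[symmetric] power_add[symmetric])

lemma bounded_denom_diff: "bounded_denom M x \<Longrightarrow> bounded_denom M y \<Longrightarrow> bounded_denom M (x - y)"
  unfolding bounded_denom_def by (simp add: right_diff_distrib Zp_diff)

lemma bounded_denom_sum: "(\<And>i. i \<in> A \<Longrightarrow> bounded_denom M (f i)) \<Longrightarrow> bounded_denom M (sum f A)"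
  unfolding bounded_denom_def by (simp add: sum_distrib_left Zp_sum)

lemma bounded_denom_Zp: "q \<in> Zp p \<Longrightarrow> bounded_denom M q"
  unfolding bounded_denom_def by (rule Zp_mult[OF Zp_of_nat])

lemma pow_dvd_mult_bounded_denom: "pow_dvd (k + M) x \<Longrightarrow> bounded_denom M y \<Longrightarrow> pow_dvd k (x * y)"
  unfolding pow_dvd_def bounded_denom_def
  by (auto simp: power_add intro!: bexI[of _ "_ * (of_nat (p ^ M) * y)"])

lemma bounded_denom_exists: "\<exists>M. bounded_denom M q"
proof -
  obtain a b where ab: "q = of_int a / of_int b" "b > 0"
    by (metis quotient_of_denom_pos' quotient_of_div surj_pair snd_conv)
  have "nat b \<noteq> 0" "\<not> is_unit p" using ab(2) prime by (auto simp: not_prime_unit)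
  then obtain v where v: "nat b = p ^ multiplicity p (nat b) * v" "\<not> p dvd v"
    using multiplicity_decompose' by blast
  have "rat_of_int b = of_nat (p ^ multiplicity p (nat b)) * of_nat v"
    using ab(2) v(1) by (metis of_nat_mult of_int_of_nat_eq int_nat_eq less_imp_le not_le)
  hence "of_nat (p ^ multiplicity p (nat b)) * q = of_int a / of_nat v"
    using ab p_gt_1 by (simp add: field_simps)
  also have "\<dots> \<in> Zp p" using Zp_divide_nat[OF Zp_of_int v(2)] .
  finally show ?thesis unfolding bounded_denom_def by blast
qed

lemma bounded_denom_finite: "\<exists>M. \<forall>i<(N::nat). bounded_denom M (f i)"
proof (induction N)
  case (Suc N)
  then obtain M where M: "\<forall>i<N. bounded_denom M (f i)" by blast
  obtain M' where M': "bounded_denom M' (f N)" using bounded_denom_exists by blast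
  have "\<forall>i<Suc N. bounded_denom (max M M') (f i)"
    using M M' bounded_denom_mono by (metis less_Suc_eq max.cobounded1 max.cobounded2)
  thus ?case by blast
qed simp

end

section \<open>\<open>p\<close>-adic summation\<close>

context padic
begin

definition p_sums :: "rat fps \<Rightarrow> rat \<Rightarrow> bool" where
  "p_sums c v \<longleftrightarrow> (\<forall>k. \<forall>\<^sub>F N in sequentially. pow_dvd k ((\<Sum>i\<le>N. c $ i) - v))"

lemma p_sums_eventually_pow_dvd:
  assumes "p_sums c v" shows "\<forall>\<^sub>F i in sequentially. pow_dvd k (c $ i)"
proof -
  obtain N0 where N0: "\<And>N. N \<ge> N0 \<Longrightarrow> pow_dvd k ((\<Sum>i\<le>N. c $ i) - v)"
    using assms unfolding p_sums_def eventually_sequentially by blast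
  have "pow_dvd k (c $ Suc N)" if "N \<ge> N0" for N
  proof -
    have "c $ Suc N = ((\<Sum>j\<le>Suc N. c $ j) - v) - ((\<Sum>j\<le>N. c $ j) - v)" by simp
    thus ?thesis using pow_dvd_diff[OF N0[of "Suc N"] N0[of N]] that by simp
  qed
  thus ?thesis unfolding eventually_sequentially by (metis Suc_le_D Suc_le_mono)
qed

lemma p_sums_bounded_denom:
  assumes "p_sums c v" shows "\<exists>M. \<forall>i. bounded_denom M (c $ i)"
proof -
  obtain N0 where N0: "\<And>i. i \<ge> N0 \<Longrightarrow> pow_dvd 0 (c $ i)"
    using p_sums_eventually_pow_dvd[OF assms, of 0] unfolding eventually_sequentially by blast
  obtain M where M: "\<forall>i<N0. bounded_denom M (c $ i)" using bounded_denom_finite by blast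
  have "bounded_denom M (c $ i)" for i
    using M N0[of i] bounded_denom_Zp pow_dvd_0_iff by (cases "i < N0") auto
  thus ?thesis by blast
qed

lemma p_sums_add:
  assumes "p_sums c u" "p_sums d v" shows "p_sums (c + d) (u + v)"
  unfolding p_sums_def
proof
  fix k
  have "\<forall>\<^sub>F N in sequentially. pow_dvd k ((\<Sum>i\<le>N. c $ i) - u)"
    "\<forall>\<^sub>F N in sequentially. pow_dvd k ((\<Sum>i\<le>N. d $ i) - v)"
    using assms unfolding p_sums_def by blast+
  thus "\<forall>\<^sub>F N in sequentially. pow_dvd k ((\<Sum>i\<le>N. (c + d) $ i) - (u + v))"
  proof eventually_elim
    case (elim N)
    have eq: "(\<Sum>i\<le>N. (c + d) $ i) - (u + v) = ((\<Sum>i\<le>N. c $ i) - u) + ((\<Sum>i\<le>N. d $ i) - v)"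
      by (simp add: sum.distrib)
    show ?case unfolding eq using pow_dvd_add elim by blast
  qed
qed

lemma p_sums_sum: "(\<And>x. x \<in> A \<Longrightarrow> p_sums (f x) (g x)) \<Longrightarrow> p_sums (sum f A) (sum g A)"
proof (induction A rule: infinite_finite_induct)
  case (insert x F) thus ?case using p_sums_add by simp
qed (auto simp: p_sums_def)

lemma p_sums_const: "p_sums (fps_const a) a"
  unfolding p_sums_def by (auto simp: sum.atMost_shift)

lemma p_sums_scale:
  assumes "p_sums c u" shows "p_sums (fps_const r * c) (r * u)"
  unfolding p_sums_def
proof (intro allI)
  fix k
  obtain M where M: "bounded_denom M r" using bounded_denom_exists by blast
  have "\<forall>\<^sub>F N in sequentially. pow_dvd (k + M) ((\<Sum>i\<le>N. c $ i) - u)"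
    using assms unfolding p_sums_def by blast
  thus "\<forall>\<^sub>F N in sequentially. pow_dvd k ((\<Sum>i\<le>N. (fps_const r * c) $ i) - r * u)"
  proof eventually_elim
    case (elim N)
    have "(\<Sum>i\<le>N. (fps_const r * c) $ i) - r * u = ((\<Sum>i\<le>N. c $ i) - u) * r"
      by (simp add: sum_distrib_left algebra_simps)
    thus ?case using pow_dvd_mult_bounded_denom[OF elim M] by simp
  qed
qed

lemma p_sums_common_bounded_denom:
  assumes "p_sums c u" "p_sums d v"
  shows "\<exists>M. (\<forall>i. bounded_denom M (c $ i)) \<and> (\<forall>N. bounded_denom M ((\<Sum>j\<le>N. d $ j) - v))
    \<and> bounded_denom M v"
proof -
  obtain M1 M2 where M1: "\<And>i. bounded_denom M1 (c $ i)" and M2: "\<And>i. bounded_denom M2 (d $ i)"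
    using p_sums_bounded_denom[OF assms(1)] p_sums_bounded_denom[OF assms(2)] by blast
  obtain M3 where M3: "bounded_denom M3 v" using bounded_denom_exists by blast
  define M where "M = max M1 (max M2 M3)"
  have "bounded_denom M (c $ i)" "bounded_denom M (d $ i)" "bounded_denom M v" for i
    using M1[of i] M2[of i] M3 bounded_denom_mono M_def by auto
  thus ?thesis by (intro exI[of _ M]) (auto intro!: bounded_denom_diff bounded_denom_sum)
qed

text \<open>With \<open>C\<^sub>N, D\<^sub>N\<close> the partial sums, the error is
  \<open>\<Sum>\<^bsub>i\<le>N\<^esub> c\<^sub>i (D\<^bsub>N-i\<^esub> - v) + (C\<^sub>N - u) v\<close>; each term is small either because \<open>c\<^sub>i\<close> is
  or because \<open>D\<^bsub>N-i\<^esub> - v\<close> is, the other factor having bounded denominator.\<close>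
lemma p_sums_mult:
  assumes cu: "p_sums c u" and dv: "p_sums d v"
  shows "p_sums (c * d) (u * v)"
  unfolding p_sums_def
proof (intro allI)
  fix k
  obtain M where bc: "\<And>i. bounded_denom M (c $ i)"
    and bD: "\<And>N. bounded_denom M ((\<Sum>j\<le>N. d $ j) - v)" and bv: "bounded_denom M v"
    using p_sums_common_bounded_denom[OF cu dv] by blast
  obtain N1 where N1: "\<And>N. N \<ge> N1 \<Longrightarrow> pow_dvd (k + M) ((\<Sum>j\<le>N. d $ j) - v)"
    using dv unfolding p_sums_def eventually_sequentially by blast
  obtain N2 where N2: "\<And>i. i \<ge> N2 \<Longrightarrow> pow_dvd (k + M) (c $ i)"
    using p_sums_eventually_pow_dvd[OF cu, of "k + M"] unfolding eventually_sequentially by blast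
  obtain N3 where N3: "\<And>N. N \<ge> N3 \<Longrightarrow> pow_dvd (k + M) ((\<Sum>j\<le>N. c $ j) - u)"
    using cu unfolding p_sums_def eventually_sequentially by blast
  have "pow_dvd k ((\<Sum>n\<le>N. (c * d) $ n) - u * v)" if N: "N \<ge> N1 + N2 + N3" for N
  proof -
    have eq: "(\<Sum>n\<le>N. (c * d) $ n) - u * v
        = (\<Sum>i\<le>N. c $ i * ((\<Sum>j\<le>N - i. d $ j) - v)) + ((\<Sum>j\<le>N. c $ j) - u) * v"
      unfolding fps_mult_partial_sum
      by (simp add: right_diff_distrib sum_subtractf sum_distrib_right sum_distrib_left mult_ac)
    have "pow_dvd k (c $ i * ((\<Sum>j\<le>N - i. d $ j) - v))" for i
    proof (cases "i \<ge> N2")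
      case True
      thus ?thesis using pow_dvd_mult_bounded_denom[OF N2[OF True] bD] by simp
    next
      case False
      hence "N - i \<ge> N1" using N by auto
      thus ?thesis using pow_dvd_mult_bounded_denom[OF N1 bc] by (simp add: mult.commute)
    qed
    moreover have "pow_dvd k (((\<Sum>j\<le>N. c $ j) - u) * v)"
      using pow_dvd_mult_bounded_denom[OF N3 bv] N by simp
    ultimately show ?thesis unfolding eq by (intro pow_dvd_add pow_dvd_sum) auto
  qed
  thus "\<forall>\<^sub>F N in sequentially. pow_dvd k ((\<Sum>n\<le>N. (c * d) $ n) - u * v)"
    unfolding eventually_sequentially by blast
qed

end

definition inner_coeff :: "'a fps fps \<Rightarrow> nat \<Rightarrow> 'a fps" where
  "inner_coeff T j = Abs_fps (\<lambda>i. T $ i $ j)"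

lemma inner_coeff_nth [simp]: "inner_coeff T j $ i = T $ i $ j"
  by (simp add: inner_coeff_def)

lemma inner_coeff_sum: "inner_coeff (sum f A) j = (\<Sum>x\<in>A. inner_coeff (f x) j)"
  by (simp add: inner_coeff_def fps_eq_iff fps_sum_nth)

lemma inner_coeff_const: "inner_coeff (fps_const a) j = fps_const (a $ j)"
  by (simp add: inner_coeff_def fps_eq_iff fps_nth_fps_const)

lemma inner_coeff_scale:
  fixes T :: "'a::comm_ring_1 fps fps"
  shows "inner_coeff (fps_const (fps_const r) * T) j = fps_const r * inner_coeff T j"
  by (simp add: inner_coeff_def fps_eq_iff)

lemma inner_coeff_mult:
  "inner_coeff (S * T) j = (\<Sum>c\<le>j. inner_coeff S c * inner_coeff T (j - c))"
proof (rule fps_ext)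
  fix i
  have "inner_coeff (S * T) j $ i = (\<Sum>a=0..i. \<Sum>c=0..j. S $ a $ c * T $ (i - a) $ (j - c))"
    by (simp add: fps_mult_nth fps_sum_nth)
  also have "\<dots> = (\<Sum>c=0..j. \<Sum>a=0..i. S $ a $ c * T $ (i - a) $ (j - c))"
    by (rule sum.swap)
  finally show "inner_coeff (S * T) j $ i = (\<Sum>c\<le>j. inner_coeff S c * inner_coeff T (j - c)) $ i"
    by (simp add: fps_mult_nth fps_sum_nth atLeast0AtMost)
qed

context padic
begin

text \<open>\<open>p_sums_at_1 T V\<close>: \<open>T(1, w) = V(w)\<close>, summing \<open>p\<close>-adically for each power of \<open>w\<close>.\<close>
definition p_sums_at_1 :: "rat fps fps \<Rightarrow> rat fps \<Rightarrow> bool" where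
  "p_sums_at_1 T V \<longleftrightarrow> (\<forall>j. p_sums (inner_coeff T j) (V $ j))"

lemma p_sums_at_1_const: "p_sums_at_1 (fps_const a) a"
  unfolding p_sums_at_1_def inner_coeff_const using p_sums_const by simp

lemma p_sums_at_1_scale:
  "p_sums_at_1 T V \<Longrightarrow> p_sums_at_1 (fps_const (fps_const r) * T) (fps_const r * V)"
  unfolding p_sums_at_1_def inner_coeff_scale using p_sums_scale by simp

lemma p_sums_at_1_sum:
  "(\<And>x. x \<in> A \<Longrightarrow> p_sums_at_1 (f x) (g x)) \<Longrightarrow> p_sums_at_1 (sum f A) (sum g A)"
  unfolding p_sums_at_1_def inner_coeff_sum fps_sum_nth by (auto intro!: p_sums_sum)

lemma p_sums_at_1_mult: "p_sums_at_1 S V \<Longrightarrow> p_sums_at_1 T W \<Longrightarrow> p_sums_at_1 (S * T) (V * W)"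
  unfolding p_sums_at_1_def inner_coeff_mult
  by (auto simp: fps_mult_nth atLeast0AtMost intro!: p_sums_sum p_sums_mult)

lemma p_sums_at_1_power: "p_sums_at_1 T V \<Longrightarrow> p_sums_at_1 (T ^ n) (V ^ n)"
  by (induction n) (auto simp: p_sums_at_1_mult p_sums_at_1_const[of 1, simplified])

end

section \<open>The \<open>w\<close>-adic exponential\<close>

text \<open>If every coefficient \<open>A $ n\<close> is divisible by \<open>w\<close>, the coefficient of \<open>t\<^sup>i w\<^sup>j\<close> in
  \<open>exp A = \<Sum>\<^sub>m A\<^sup>m / m!\<close> only involves \<open>m \<le> j\<close>; \<open>w_exp\<close> reads it off the truncation
  \<open>exp_trunc A j\<close>.\<close>
definition exp_trunc :: "'a::field_char_0 fps fps \<Rightarrow> nat \<Rightarrow> 'a fps fps" where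
  "exp_trunc A N = (\<Sum>m\<le>N. fps_const (fps_const (1 / fact m)) * A ^ m)"

definition w_exp :: "'a::field_char_0 fps fps \<Rightarrow> 'a fps fps" where
  "w_exp A = Abs_fps (\<lambda>i. Abs_fps (\<lambda>j. exp_trunc A j $ i $ j))"

lemma exp_trunc_nth: "exp_trunc A N $ i $ j = (\<Sum>m\<le>N. (A ^ m) $ i $ j / fact m)"
  by (simp add: exp_trunc_def fps_sum_nth)

lemma power_nth_nth_below:
  fixes A :: "'a::comm_ring_1 fps fps"
  assumes "\<And>n. A $ n $ 0 = 0"
  shows "d < m \<Longrightarrow> (A ^ m) $ i $ d = 0"
proof (induction m arbitrary: i d)
  case (Suc m)
  have "(A ^ Suc m) $ i $ d = (\<Sum>a=0..i. \<Sum>c=0..d. A $ a $ c * (A ^ m) $ (i - a) $ (d - c))"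
    by (simp add: fps_mult_nth fps_sum_nth)
  also have "\<dots> = 0"
  proof (intro sum.neutral ballI)
    fix a c assume "c \<in> {0..d}"
    thus "A $ a $ c * (A ^ m) $ (i - a) $ (d - c) = 0"
      using assms Suc by (cases "c = 0") auto
  qed
  finally show ?case .
qed simp

lemma w_exp_nth_nth:
  assumes "\<And>n. A $ n $ 0 = 0" "N \<ge> j"
  shows "w_exp A $ i $ j = exp_trunc A N $ i $ j"
proof -
  have "exp_trunc A N $ i $ j = exp_trunc A j $ i $ j"
    unfolding exp_trunc_nth using power_nth_nth_below[OF assms(1)] assms(2)
    by (intro sum.mono_neutral_right) auto
  thus ?thesis by (simp add: w_exp_def)
qed

lemma fps_mult_nth_nth_cong:
  assumes "\<And>b d. d \<le> j \<Longrightarrow> X $ b $ d = Y $ b $ d"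
  shows "(Z * X) $ i $ j = (Z * Y) $ i $ j"
  unfolding fps_mult_nth fps_sum_nth using assms by (intro sum.cong refl) auto

lemma fps_deriv_exp_trunc: "fps_deriv (exp_trunc A (Suc N)) = fps_deriv A * exp_trunc A N"
proof -
  have "fps_deriv (exp_trunc A (Suc N))
      = (\<Sum>m\<le>N. fps_const (fps_const (1 / fact (Suc m))) * fps_deriv (A ^ Suc m))"
    by (simp add: exp_trunc_def fps_deriv_sum sum.atMost_Suc_shift del: sum.atMost_Suc)
  also have "\<dots> = (\<Sum>m\<le>N. fps_deriv A * (fps_const (fps_const (1 / fact m)) * A ^ m))"
  proof (intro sum.cong refl)
    fix m
    have e: "fps_const (fps_const (1 / fact (Suc m))) * fps_const (of_nat (Suc m))
        = (fps_const (fps_const (1 / fact m)) :: 'a fps fps)"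
      by (simp add: fps_of_nat[symmetric] del: of_nat_Suc)
    show "fps_const (fps_const (1 / fact (Suc m))) * fps_deriv (A ^ Suc m)
        = fps_deriv A * (fps_const (fps_const (1 / fact m)) * A ^ m)"
      unfolding fps_deriv_power diff_Suc_1 by (simp only: e[symmetric] mult_ac)
  qed
  also have "\<dots> = fps_deriv A * exp_trunc A N" by (simp add: exp_trunc_def sum_distrib_left)
  finally show ?thesis .
qed

lemma fps_deriv_w_exp:
  assumes "\<And>n. A $ n $ 0 = 0"
  shows "fps_deriv (w_exp A) = fps_deriv A * w_exp A"
proof (rule fps_ext, rule fps_ext)
  fix i j
  have "fps_deriv (w_exp A) $ i $ j = fps_deriv (exp_trunc A (Suc j)) $ i $ j"
    using w_exp_nth_nth[OF assms, where N = "Suc j" and i = "Suc i"]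
    by (simp add: fps_of_nat_mult_nth del: of_nat_Suc)
  also have "\<dots> = (fps_deriv A * exp_trunc A j) $ i $ j" by (simp add: fps_deriv_exp_trunc)
  also have "\<dots> = (fps_deriv A * w_exp A) $ i $ j"
    using w_exp_nth_nth[OF assms] by (intro fps_mult_nth_nth_cong) simp
  finally show "fps_deriv (w_exp A) $ i $ j = (fps_deriv A * w_exp A) $ i $ j" .
qed

lemma w_exp_nth_0:
  assumes "A $ 0 = 0"
  shows "w_exp A $ 0 = 1"
proof (rule fps_ext)
  fix j
  have "w_exp A $ 0 $ j = (\<Sum>m\<le>j. (A ^ m) $ 0 $ j / fact m)"
    by (simp add: w_exp_def exp_trunc_nth)
  also have "\<dots> = (\<Sum>m\<le>j. if m = 0 then 1 $ j else 0)"
    using assms by (intro sum.cong refl) (auto simp: fps_power_zeroth power_0_left)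
  finally show "w_exp A $ 0 $ j = 1 $ j" by simp
qed

context padic
begin

lemma p_sums_at_1_w_exp:
  assumes "p_sums_at_1 A V"
  shows "p_sums_at_1 (w_exp A) (fps_exp 1 oo V)"
  unfolding p_sums_at_1_def
proof
  fix j
  have "p_sums_at_1 (exp_trunc A j) (\<Sum>m\<le>j. fps_const (1 / fact m) * V ^ m)"
    unfolding exp_trunc_def
    by (intro p_sums_at_1_sum p_sums_at_1_scale p_sums_at_1_power assms)
  moreover have "inner_coeff (exp_trunc A j) j = inner_coeff (w_exp A) j"
    by (simp add: fps_eq_iff w_exp_def)
  moreover have "(\<Sum>m\<le>j. fps_const (1 / fact m) * V ^ m) $ j = (fps_exp 1 oo V) $ j"
    by (simp add: fps_compose_nth fps_sum_nth atLeast0AtMost)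
  ultimately show "p_sums (inner_coeff (w_exp A) j) ((fps_exp 1 oo V) $ j)"
    unfolding p_sums_at_1_def by metis
qed

end

section \<open>The logarithm of \<open>f\<close> at \<open>t = 1\<close>\<close>

lemma subst_tm_nth:
  "subst_tm a c m $ n = (if m dvd n then fps_const (a $ (n div m)) * c ^ (n div m) else 0)"
  by (simp add: subst_tm_def)

context padic
begin

lemma AH_log_nth_power: "AH_log p $ (p ^ i) = 1 / of_nat (p ^ i)"
  by (auto simp: AH_log_def)

lemma AH_log_nth_not_power: "\<not> (\<exists>i. n = p ^ i) \<Longrightarrow> AH_log p $ n = 0"
  by (auto simp: AH_log_def)

lemma AH_log_nth_div_p_not_power:
  assumes "\<not> (\<exists>i. n = p ^ i)" "p dvd n" shows "AH_log p $ (n div p) = 0"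
proof (rule AH_log_nth_not_power, rule notI)
  assume "\<exists>i. n div p = p ^ i"
  then obtain i where "n div p = p ^ i" by blast
  hence "n = p ^ Suc i" using assms(2) by (metis dvd_mult_div_cancel power_Suc)
  thus False using assms(1) by blast
qed

lemma AH_log_nth_0: "AH_log p $ 0 = 0"
  using p_gt_1 by (intro AH_log_nth_not_power) simp

definition log_f :: "rat fps fps" where
  "log_f = subst_tm (AH_log p) zvar 1 + subst_tm (AH_log p) 1 p
      - subst_tm (AH_log p) 1 1 - subst_tm (AH_log p) zvar p"

lemma log_f_nth: "log_f $ n = fps_const (AH_log p $ n) * (zvar ^ n - 1)
   + (if p dvd n then fps_const (AH_log p $ (n div p)) * (1 - zvar ^ (n div p)) else 0)"
  by (simp add: log_f_def subst_tm_nth algebra_simps)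

lemma log_f_nth_not_power: "\<not> (\<exists>i. n = p ^ i) \<Longrightarrow> log_f $ n = 0"
  unfolding log_f_nth by (simp add: AH_log_nth_not_power AH_log_nth_div_p_not_power)

lemma log_f_nth_0: "log_f $ 0 = 0"
  using p_gt_1 by (intro log_f_nth_not_power) simp

lemma log_f_nth_nth_0: "log_f $ n $ 0 = 0"
  unfolding log_f_nth by (simp add: zvar_def fps_power_zeroth)

text \<open>An approximation of \<open>log (1 - w)\<close>.\<close>
definition log_approx :: "nat \<Rightarrow> rat fps" where
  "log_approx K = fps_const (1 / of_nat (p ^ K)) * (zvar ^ (p ^ K) - 1)"

lemma log_f_nth_1: "log_f $ 1 = log_approx 0"
  using p_gt_1 AH_log_nth_power[of 0] by (simp add: log_f_nth log_approx_def)

lemma log_f_nth_p_power: "log_f $ (p ^ Suc K) = log_approx (Suc K) - log_approx K"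
proof -
  have dv: "p ^ Suc K div p = p ^ K" using p_gt_1 by simp
  show ?thesis unfolding log_f_nth log_approx_def dv AH_log_nth_power
    by (simp add: algebra_simps del: power_Suc of_nat_power)
qed

text \<open>The partial sums of \<open>log f\<close> at \<open>t = 1\<close> telescope.\<close>
lemma log_f_partial_sum:
  assumes "N \<ge> 1"
  shows "\<exists>K. p ^ K \<le> N \<and> N < p ^ Suc K \<and> (\<Sum>i\<le>N. log_f $ i) = log_approx K"
  using assms
proof (induction N rule: dec_induct)
  case base
  show ?case using p_gt_1 log_f_nth_0 log_f_nth_1 by (intro exI[of _ 0]) auto
next
  case (step N)
  then obtain K where K: "p ^ K \<le> N" "N < p ^ Suc K" "(\<Sum>i\<le>N. log_f $ i) = log_approx K" by blast
  show ?case
  proof (cases "Suc N = p ^ Suc K")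
    case True
    have "(\<Sum>i\<le>Suc N. log_f $ i) = log_approx K + log_f $ Suc N" using K(3) by simp
    also have "log_f $ Suc N = log_approx (Suc K) - log_approx K"
      unfolding True by (rule log_f_nth_p_power)
    finally have "(\<Sum>i\<le>Suc N. log_f $ i) = log_approx (Suc K)" by simp
    moreover have "Suc N < p ^ Suc (Suc K)" using True p_gt_1 by simp
    ultimately show ?thesis using True by (intro exI[of _ "Suc K"]) auto
  next
    case False
    have "\<not> (\<exists>i. Suc N = p ^ i)"
    proof
      assume "\<exists>i. Suc N = p ^ i"
      then obtain i where i: "Suc N = p ^ i" by blast
      have "p ^ K < p ^ i" "p ^ i < p ^ Suc K" using K(1,2) False i by auto
      thus False using power_less_imp_less_exp p_gt_1 by (metis Suc_leI leD)
    qed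
    hence "log_f $ Suc N = 0" by (rule log_f_nth_not_power)
    thus ?thesis using K False by (intro exI[of _ K]) auto
  qed
qed

lemma pow_dvd_one_minus_binomial:
  assumes "E \<le> K" "m < p ^ E"
  shows "pow_dvd (K - E) (1 - (-1) ^ m * of_nat ((p ^ K - 1) choose m))"
  using assms(2)
proof (induction m)
  case (Suc m)
  define n where "n = p ^ K"
  have "p ^ E \<le> n" unfolding n_def using assms(1) p_gt_1 by (simp add: power_increasing)
  hence mn: "Suc m < n" using Suc by linarith
  define c where "c = ((-1) ^ m * of_nat ((n - 1) choose m) :: rat)"
  have IH: "pow_dvd (K - E) (1 - c)" using Suc c_def n_def by simp
  have "of_nat (Suc m) * of_nat ((n - 1) choose Suc m)
      = (of_nat (n - 1 - m) * of_nat ((n - 1) choose m) :: rat)"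
    using Suc_times_binomial_Suc[of m "n - 1"] by (metis of_nat_mult)
  also have "(of_nat (n - 1 - m) :: rat) = of_nat n - of_nat (Suc m)"
    using mn by (simp add: of_nat_diff)
  finally have eq: "of_nat ((n - 1) choose Suc m)
      = (of_nat n - of_nat (Suc m)) * of_nat ((n - 1) choose m) / (of_nat (Suc m) :: rat)"
    by (simp add: field_simps del: of_nat_Suc)
  have split: "1 - (-1) ^ Suc m * of_nat ((n - 1) choose Suc m)
      = (1 - c) + of_nat n / of_nat (Suc m) * c"
    unfolding eq c_def by (simp add: field_simps del: of_nat_Suc)
  have "pow_dvd (K - E) (of_nat n / of_nat (Suc m))"
    using pow_dvd_divide_nat[of K "of_nat n" "Suc m" E] pow_dvd_p_power_mult[of 1 K] Suc(2) assms(1)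
    unfolding n_def by simp
  moreover have "c \<in> Zp p" unfolding c_def by (intro Zp_mult Zp_power Zp_uminus) auto
  ultimately have "pow_dvd (K - E) (of_nat n / of_nat (Suc m) * c)" by (rule pow_dvd_mult_Zp)
  thus ?case unfolding n_def[symmetric] split by (rule pow_dvd_add[OF IH])
qed simp

lemma log_approx_nth:
  "log_approx K $ j = (if j = 0 then 0 else (-1) ^ j * of_nat ((p ^ K) choose j) / of_nat (p ^ K))"
  by (simp add: log_approx_def zvar_power_nth)

lemma log_approx_converges:
  assumes "j \<ge> 1"
  shows "\<exists>K0. \<forall>K\<ge>K0. pow_dvd k (log_approx K $ j + 1 / of_nat j)"
proof -
  have "j < 2 ^ j" by simp
  also have "(2::nat) ^ j \<le> p ^ j" using p_gt_1 by (intro power_mono) auto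
  finally have jE: "j < p ^ j" .
  have "pow_dvd k (log_approx K $ j + 1 / of_nat j)" if K: "K \<ge> k + 2 * j" for K
  proof -
    define n where "n = p ^ K"
    have n1: "n \<ge> 1" unfolding n_def using p_gt_1 by simp
    have "of_nat j * of_nat (n choose j) = (of_nat n * of_nat ((n - 1) choose (j - 1)) :: rat)"
      using times_binomial_minus1_eq[of j n] assms by (metis of_nat_mult not_one_le_zero neq0_conv)
    hence eq: "(of_nat (n choose j) :: rat) / of_nat n = of_nat ((n - 1) choose (j - 1)) / of_nat j"
      using n1 assms by (simp add: field_simps)
    have sj: "(-1 :: rat) ^ j = - ((-1) ^ (j - 1))" using assms by (cases j) auto
    have "log_approx K $ j = (-1) ^ j * ((of_nat (n choose j) :: rat) / of_nat n)"
      unfolding log_approx_nth n_def using assms by simp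
    hence "log_approx K $ j = - ((-1) ^ (j - 1) * of_nat ((n - 1) choose (j - 1))) / of_nat j"
      unfolding eq sj by simp
    hence "log_approx K $ j + 1 / of_nat j
        = (1 - (-1) ^ (j - 1) * of_nat ((n - 1) choose (j - 1))) / of_nat j"
      by (simp add: diff_divide_distrib)
    moreover have "pow_dvd (K - j) (1 - (-1) ^ (j - 1) * of_nat ((n - 1) choose (j - 1)))"
      unfolding n_def using pow_dvd_one_minus_binomial[of j K "j - 1"] K jE by simp
    ultimately have "pow_dvd (K - j - j) (log_approx K $ j + 1 / of_nat j)"
      using pow_dvd_divide_nat[of "K - j" _ j j] assms jE K by simp
    thus ?thesis using pow_dvd_mono K by simp
  qed
  thus ?thesis by blast
qed

text \<open>\<open>log_zvar = log (1 - w) = log z\<close>.\<close>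
definition log_zvar :: "rat fps" where
  "log_zvar = Abs_fps (\<lambda>j. if j = 0 then 0 else - 1 / of_nat j)"

lemma p_sums_at_1_log_f: "p_sums_at_1 log_f log_zvar"
  unfolding p_sums_at_1_def p_sums_def
proof (intro allI)
  fix j k
  show "\<forall>\<^sub>F N in sequentially. pow_dvd k ((\<Sum>i\<le>N. inner_coeff log_f j $ i) - log_zvar $ j)"
  proof (cases "j = 0")
    case True
    thus ?thesis by (simp add: log_f_nth_nth_0 log_zvar_def)
  next
    case False
    then obtain K0 where K0: "\<And>K. K \<ge> K0 \<Longrightarrow> pow_dvd k (log_approx K $ j + 1 / of_nat j)"
      using log_approx_converges[of j k] by auto
    have "pow_dvd k ((\<Sum>i\<le>N. inner_coeff log_f j $ i) - log_zvar $ j)" if N: "N \<ge> p ^ K0" for N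
    proof -
      have "N \<ge> 1" using N p_gt_1 by (meson le_trans one_le_power less_imp_le)
      then obtain K where K: "p ^ K \<le> N" "N < p ^ Suc K" "(\<Sum>i\<le>N. log_f $ i) = log_approx K"
        using log_f_partial_sum by blast
      have "K0 < Suc K" using N K power_less_imp_less_exp p_gt_1 by (meson le_less_trans)
      moreover have "(\<Sum>i\<le>N. inner_coeff log_f j $ i) = log_approx K $ j"
        using K(3) by (simp add: fps_sum_nth[symmetric])
      ultimately show ?thesis using K0[of K] False by (simp add: log_zvar_def)
    qed
    thus ?thesis unfolding eventually_sequentially by blast
  qed
qed

lemma fps_exp_compose_log_zvar: "fps_exp 1 oo log_zvar = zvar"
proof -
  define C where "C = fps_deriv log_zvar"
  have C: "C $ n = -1" for n by (simp add: C_def log_zvar_def del: of_nat_Suc)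
  have "log_zvar $ 0 = 0" by (simp add: log_zvar_def)
  hence "fps_deriv (fps_exp 1 oo log_zvar) = C * (fps_exp 1 oo log_zvar)"
    by (simp add: C_def fps_compose_deriv mult.commute)
  moreover have "fps_deriv zvar = C * zvar"
  proof (rule fps_ext)
    fix n
    have "C * zvar = C - fps_X * C" by (simp add: zvar_def right_diff_distrib mult.commute)
    thus "fps_deriv zvar $ n = (C * zvar) $ n" by (cases n) (simp_all add: zvar_def C)
  qed
  ultimately show ?thesis by (rule fps_ode_unique) (simp add: zvar_def)
qed

lemma p_sums_at_1_w_exp_log_f: "p_sums_at_1 (w_exp log_f) zvar"
  using p_sums_at_1_w_exp[OF p_sums_at_1_log_f] fps_exp_compose_log_zvar by simp

end

section \<open>\<open>f = exp (log f)\<close>\<close>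

definition lift_fps :: "'a::zero fps \<Rightarrow> 'a fps fps" where
  "lift_fps a = Abs_fps (\<lambda>n. fps_const (a $ n))"

lemma lift_fps_nth [simp]: "lift_fps a $ n = fps_const (a $ n)"
  by (simp add: lift_fps_def)

lemma lift_fps_mult: "lift_fps (a * b) = lift_fps a * lift_fps (b :: 'a::comm_ring_1 fps)"
proof (rule fps_ext, rule fps_ext)
  fix n j
  show "lift_fps (a * b) $ n $ j = (lift_fps a * lift_fps b) $ n $ j"
    by (cases "j = 0") (simp_all add: fps_mult_nth fps_sum_nth)
qed

lemma lift_fps_deriv: "fps_deriv (lift_fps a) = lift_fps (fps_deriv (a :: 'a::comm_ring_1 fps))"
  by (rule fps_ext) (simp add: fps_of_nat[symmetric] del: of_nat_Suc)

lemma subst_tm_eq_compose: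
  "m \<ge> 1 \<Longrightarrow> subst_tm a c m = lift_fps a oo (fps_const c * fps_X ^ m)"
  by (rule fps_ext) (simp add: fps_compose_monom_nth subst_tm_nth)

lemma subst_tm_nth_0: "subst_tm a c m $ 0 = fps_const (a $ 0)"
  by (simp add: subst_tm_nth)

lemma fps_deriv_subst_tm_exp_compose:
  fixes L :: "rat fps"
  assumes "m \<ge> 1" "L $ 0 = 0"
  shows "fps_deriv (subst_tm (fps_exp 1 oo L) c m)
    = fps_deriv (subst_tm L c m) * subst_tm (fps_exp 1 oo L) c m"
proof -
  define B where "B = fps_const c * fps_X ^ m"
  have B0: "B $ 0 = 0" using assms by (simp add: B_def)
  have dE: "fps_deriv (fps_exp 1 oo L) = fps_deriv L * (fps_exp 1 oo L)"
    using assms(2) by (simp add: fps_compose_deriv mult.commute)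
  have "fps_deriv (subst_tm (fps_exp 1 oo L) c m)
      = (lift_fps (fps_deriv L) oo B) * (lift_fps (fps_exp 1 oo L) oo B) * fps_deriv B"
    unfolding subst_tm_eq_compose[OF assms(1)] B_def[symmetric] fps_compose_deriv[OF B0]
      lift_fps_deriv dE lift_fps_mult fps_compose_mult_distrib[OF B0] ..
  thus ?thesis
    unfolding subst_tm_eq_compose[OF assms(1)] B_def[symmetric] fps_compose_deriv[OF B0]
      lift_fps_deriv by (simp add: mult_ac)
qed

context padic
begin

lemma f_AH_eq_w_exp_log_f: "f_AH p = w_exp log_f"
proof -
  define P Q R S where "P = subst_tm (artin_hasse p) zvar 1" and "Q = subst_tm (artin_hasse p) 1 p"
    and "R = subst_tm (artin_hasse p) 1 1" and "S = subst_tm (artin_hasse p) zvar p"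
  define DP DQ DR DS where "DP = fps_deriv (subst_tm (AH_log p) zvar 1)"
    and "DQ = fps_deriv (subst_tm (AH_log p) 1 p)" and "DR = fps_deriv (subst_tm (AH_log p) 1 1)"
    and "DS = fps_deriv (subst_tm (AH_log p) zvar p)"
  define X where "X = w_exp log_f"
  have deriv: "fps_deriv (subst_tm (artin_hasse p) c m)
      = fps_deriv (subst_tm (AH_log p) c m) * subst_tm (artin_hasse p) c m" if "m \<ge> 1" for c m
    unfolding artin_hasse_def using that AH_log_nth_0 by (rule fps_deriv_subst_tm_exp_compose)
  have nth_0: "subst_tm (artin_hasse p) c m $ 0 = 1" for c m
    by (simp add: subst_tm_nth_0 artin_hasse_def)
  have dP: "fps_deriv P = DP * P" and dQ: "fps_deriv Q = DQ * Q"
    and dR: "fps_deriv R = DR * R" and dS: "fps_deriv S = DS * S"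
    using p_gt_1 unfolding P_def Q_def R_def S_def DP_def DQ_def DR_def DS_def
    by (simp_all add: deriv)
  have dX: "fps_deriv X = (DP + DQ - DR - DS) * X"
    unfolding X_def DP_def DQ_def DR_def DS_def
    using fps_deriv_w_exp[OF log_f_nth_nth_0] by (simp add: log_f_def)
  text \<open>\<open>X R S\<close> and \<open>P Q\<close> solve the same linear ODE with the same constant term.\<close>
  have "fps_deriv (X * (R * S)) = (DP + DQ) * (X * (R * S))"
    by (simp add: dX dR dS algebra_simps)
  moreover have "fps_deriv (P * Q) = (DP + DQ) * (P * Q)"
    by (simp add: dP dQ algebra_simps)
  moreover have "X $ 0 = 1" unfolding X_def by (rule w_exp_nth_0) (rule log_f_nth_0)
  hence "(X * (R * S)) $ 0 = (P * Q) $ 0" by (simp add: P_def Q_def R_def S_def nth_0)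
  ultimately have XRS: "X * (R * S) = P * Q" by (rule fps_ode_unique)
  have "(R * S) * inverse (R * S) = 1"
    by (rule fps_mult_inverse_eq_1) (simp add: R_def S_def nth_0)
  hence "P * Q * inverse (R * S) = X" unfolding XRS[symmetric] by (simp add: mult_ac)
  thus ?thesis unfolding f_AH_def P_def Q_def R_def S_def X_def by simp
qed

end

section \<open>Integrality of the Artin--Hasse exponential\<close>

lemma fps_compose_X_power_nth:
  fixes a :: "'a::comm_ring_1 fps"
  assumes "m \<ge> 1"
  shows "(a oo fps_X ^ m) $ n = (if m dvd n then a $ (n div m) else 0)"
  using fps_compose_monom_nth[OF assms, of a 1 n] by simp

lemma fps_cutoff_Suc: "fps_cutoff (Suc m) F = fps_cutoff m F + fps_const (F $ m) * fps_X ^ m"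
  by (rule fps_ext) (simp add: less_Suc_eq)

context padic
begin

lemma fermat_int:
  assumes "\<not> int p dvd b" shows "int p dvd b ^ (p - 1) - 1"
proof -
  define r where "r = nat (b mod int p)"
  have br: "b mod int p = int r" unfolding r_def using p_gt_1 by simp
  have "\<not> p dvd r"
  proof
    assume "p dvd r"
    hence "int p dvd b mod int p" using br by simp
    thus False using assms by (simp add: dvd_mod_iff)
  qed
  hence "[r ^ (p - 1) = 1] (mod p)" using fermat_theorem[OF prime] by simp
  hence "(int r) ^ (p - 1) mod int p = 1 mod int p"
    by (metis cong_def of_nat_1 of_nat_mod of_nat_power)
  hence "(b mod int p) ^ (p - 1) mod int p = 1 mod int p" using br by simp
  hence "b ^ (p - 1) mod int p = 1 mod int p" by (simp add: power_mod)
  thus ?thesis by (simp add: mod_eq_dvd_iff)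
qed

lemma fermat_int_fraction:
  assumes "\<not> int p dvd b" shows "int p dvd a ^ p - a * b ^ (p - 1)"
proof -
  have "int p dvd a ^ p - a"
  proof (cases "int p dvd a")
    case True
    moreover have "a dvd a ^ p" using p_gt_1 by (simp add: dvd_power)
    ultimately have "int p dvd a ^ p" by (rule dvd_trans)
    thus ?thesis using True by simp
  next
    case False
    hence "int p dvd a * (a ^ (p - 1) - 1)" using fermat_int by simp
    moreover have "a * (a ^ (p - 1) - 1) = a ^ p - a"
      using p_gt_1 by (simp add: algebra_simps power_Suc[symmetric])
    ultimately show ?thesis by simp
  qed
  moreover have "int p dvd a * (b ^ (p - 1) - 1)" using fermat_int[OF assms] by simp
  moreover have "a ^ p - a * b ^ (p - 1) = (a ^ p - a) - a * (b ^ (p - 1) - 1)"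
    by (simp add: algebra_simps)
  ultimately show ?thesis by (metis dvd_diff)
qed

lemma pow_dvd_1_power_p_minus_self:
  assumes "c \<in> Zp p" shows "pow_dvd 1 (c ^ p - c)"
proof -
  obtain a b where ab: "b \<noteq> 0" "\<not> int p dvd b" "c = of_int a / of_int b" using assms Zp_iff by blast
  obtain k where k: "a ^ p - a * b ^ (p - 1) = int p * k"
    using fermat_int_fraction[OF ab(2), of a] by (elim dvdE)
  have "(of_int b :: rat) ^ p = of_int b * of_int b ^ (p - 1)"
    using p_gt_1 by (cases p) simp_all
  hence "c ^ p - c = of_int (a ^ p - a * b ^ (p - 1)) / of_int (b ^ p)"
    using ab(1) unfolding ab(3) by (simp add: field_simps power_divide)
  also have "\<dots> = of_nat p * (of_int k / of_int (b ^ p))" unfolding k by simp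
  finally have eq: "c ^ p - c = of_nat p * (of_int k / of_int (b ^ p))" .
  have "\<not> int p dvd b ^ p" using ab(2) prime prime_dvd_power_int by fastforce
  hence "of_int k / of_int (b ^ p) \<in> Zp p" using ab(1) by (intro Zp_intro) auto
  thus ?thesis unfolding eq by (rule pow_dvd_1_p_mult)
qed

lemma fact_p_decomposition: "\<exists>u. \<not> p dvd u \<and> fact n = p ^ (n div p) * fact (n div p) * (u :: nat)"
proof (induction n)
  case (Suc n)
  then obtain u where u: "\<not> p dvd u" "fact n = p ^ (n div p) * fact (n div p) * (u :: nat)" by blast
  show ?case
  proof (cases "p dvd Suc n")
    case True
    define q where "q = n div p"
    have d: "Suc n div p = Suc q" using True by (simp add: div_Suc dvd_eq_mod_eq_0 q_def)
    hence "Suc n = p * Suc q" using True by (metis dvd_mult_div_cancel)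
    hence "fact (Suc n) = p ^ Suc q * (Suc q * fact q) * u"
      unfolding fact_Suc[of n] u(2) q_def[symmetric] by (simp only: power_Suc of_nat_id mult_ac)
    thus ?thesis unfolding d using u(1) by (intro exI[of _ u]) simp
  next
    case False
    hence d: "Suc n div p = n div p" by (simp add: div_Suc dvd_eq_mod_eq_0)
    have "fact (Suc n) = p ^ (n div p) * fact (n div p) * (Suc n * u)"
      unfolding fact_Suc[of n] u(2) by (simp only: of_nat_id mult_ac)
    moreover have "\<not> p dvd Suc n * u" using False u(1) prime_dvd_mult_iff[OF prime] by blast
    ultimately show ?thesis unfolding d by blast
  qed
qed (intro exI[of _ 1], use p_gt_1 in auto)

lemma Zp_p_power_divide_fact: "j \<ge> 1 \<Longrightarrow> (of_nat p :: rat) ^ (j - 1) / fact j \<in> Zp p"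
proof (induction j rule: less_induct)
  case (less j)
  obtain u where u: "\<not> p dvd u" "fact j = p ^ (j div p) * fact (j div p) * (u :: nat)"
    using fact_p_decomposition by blast
  define q where "q = j div p"
  have fj: "(fact j :: rat) = of_nat p ^ q * fact q * of_nat u"
    using arg_cong[OF u(2), of "of_nat :: nat \<Rightarrow> rat"] unfolding q_def by simp
  show ?case
  proof (cases "q = 0")
    case True
    have "(of_nat p :: rat) ^ (j - 1) / fact j = of_nat (p ^ (j - 1)) / of_nat u"
      unfolding fj True by simp
    also have "\<dots> \<in> Zp p" by (rule Zp_divide_nat[OF Zp_of_nat u(1)])
    finally show ?thesis .
  next
    case False
    have "q < j" unfolding q_def using less.prems p_gt_1 by simp
    hence IH: "(of_nat p :: rat) ^ (q - 1) / fact q \<in> Zp p" using less.IH False by simp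
    have "2 * q \<le> p * q" using p_gt_1 by (intro mult_le_mono1) simp
    also have "p * q \<le> j" unfolding q_def by (simp add: times_div_less_eq_dividend)
    finally have jq: "j - 1 = (j - 2 * q) + q + (q - 1)" using False by arith
    have "(of_nat p :: rat) ^ (j - 1) / fact j
        = of_nat (p ^ (j - 2 * q)) * (of_nat p ^ (q - 1) / fact q) / of_nat u"
      unfolding fj jq power_add using p_gt_1 by (simp add: field_simps)
    also have "\<dots> \<in> Zp p" by (intro Zp_divide_nat Zp_mult Zp_of_nat IH u(1))
    finally show ?thesis .
  qed
qed

definition Zp_fps :: "rat fps \<Rightarrow> bool" where
  "Zp_fps x \<longleftrightarrow> (\<forall>j. x $ j \<in> Zp p)"

definition p_dvd_fps :: "rat fps \<Rightarrow> bool" where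
  "p_dvd_fps x \<longleftrightarrow> (\<forall>j. pow_dvd 1 (x $ j))"

lemma Zp_fps_diff: "Zp_fps x \<Longrightarrow> Zp_fps y \<Longrightarrow> Zp_fps (x - y)"
  and Zp_fps_1: "Zp_fps 1"
  and Zp_fps_const: "c \<in> Zp p \<Longrightarrow> Zp_fps (fps_const c)"
  and Zp_fps_X_power: "Zp_fps (fps_X ^ m)"
  and Zp_fps_of_nat: "Zp_fps (of_nat m)"
  by (auto simp: Zp_fps_def fps_of_nat[symmetric])

lemma Zp_fps_sum: "(\<And>x. x \<in> A \<Longrightarrow> Zp_fps (f x)) \<Longrightarrow> Zp_fps (sum f A)"
  unfolding Zp_fps_def fps_sum_nth by auto

lemma Zp_fps_mult: "Zp_fps x \<Longrightarrow> Zp_fps y \<Longrightarrow> Zp_fps (x * y)"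
  unfolding Zp_fps_def fps_mult_nth by auto

lemma Zp_fps_power: "Zp_fps x \<Longrightarrow> Zp_fps (x ^ n)"
  by (induction n) (auto intro: Zp_fps_mult Zp_fps_1)

lemma Zp_fps_cutoff: "(\<And>i. i < m \<Longrightarrow> F $ i \<in> Zp p) \<Longrightarrow> Zp_fps (fps_cutoff m F)"
  by (auto simp: Zp_fps_def)

lemma p_dvd_fps_add: "p_dvd_fps x \<Longrightarrow> p_dvd_fps y \<Longrightarrow> p_dvd_fps (x + y)"
  and p_dvd_fps_diff: "p_dvd_fps x \<Longrightarrow> p_dvd_fps y \<Longrightarrow> p_dvd_fps (x - y)"
  and p_dvd_fps_uminus: "p_dvd_fps x \<Longrightarrow> p_dvd_fps (- x)"
  by (auto simp: p_dvd_fps_def intro: pow_dvd_add pow_dvd_diff pow_dvd_uminus)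

lemma p_dvd_fps_sum: "(\<And>i. i \<in> A \<Longrightarrow> p_dvd_fps (f i)) \<Longrightarrow> p_dvd_fps (sum f A)"
  by (auto simp: p_dvd_fps_def fps_sum_nth intro: pow_dvd_sum)

lemma p_dvd_fps_mult: "Zp_fps y \<Longrightarrow> p_dvd_fps x \<Longrightarrow> p_dvd_fps (y * x)"
  unfolding p_dvd_fps_def Zp_fps_def fps_mult_nth
  by (auto intro!: pow_dvd_sum simp: mult.commute[of "y $ _"] intro: pow_dvd_mult_Zp)

lemma p_dvd_fps_p_mult: "Zp_fps x \<Longrightarrow> p_dvd_fps (of_nat p * x)"
  unfolding p_dvd_fps_def Zp_fps_def fps_of_nat_mult_nth using pow_dvd_1_p_mult by simp

lemma p_dvd_fps_add_power_p:
  assumes "Zp_fps a" "Zp_fps b"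
  shows "p_dvd_fps ((a + b) ^ p - a ^ p - b ^ p)"
proof -
  obtain k where k: "p = Suc k" using p_gt_1 by (cases p) auto
  define g where "g i = of_nat (p choose i) * a ^ i * b ^ (p - i)" for i
  have "(a + b) ^ p = (\<Sum>i\<le>p. g i)" unfolding g_def by (rule binomial_ring)
  also have "\<dots> = g 0 + (\<Sum>i<k. g (Suc i)) + g p"
    unfolding k by (simp add: sum.atMost_Suc sum.atMost_shift)
  finally have eq: "(a + b) ^ p - a ^ p - b ^ p = (\<Sum>i<k. g (Suc i))"
    unfolding g_def by simp
  have "p_dvd_fps (g (Suc i))" if "i < k" for i
  proof -
    have "p dvd (p choose Suc i)" using that k prime by (intro dvd_choose_prime) auto
    then obtain m where m: "p choose Suc i = p * m" by (elim dvdE)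
    have "g (Suc i) = of_nat p * (of_nat m * a ^ Suc i * b ^ (p - Suc i))"
      unfolding g_def m by (simp add: mult_ac)
    thus ?thesis using assms by (simp add: p_dvd_fps_p_mult Zp_fps_mult Zp_fps_power Zp_fps_of_nat)
  qed
  thus ?thesis unfolding eq by (intro p_dvd_fps_sum) auto
qed

text \<open>For polynomials with \<open>\<int>\<^sub>(\<^sub>p\<^sub>)\<close> coefficients, \<open>F(t)\<^sup>p \<equiv> F(t\<^sup>p) mod p\<close>: the
  Frobenius is additive mod \<open>p\<close>, and on monomials it is Fermat's little theorem.\<close>
lemma p_dvd_fps_cutoff_power_p_minus_compose:
  assumes "\<And>i. i < m \<Longrightarrow> F $ i \<in> Zp p"
  shows "p_dvd_fps (fps_cutoff m F ^ p - (fps_cutoff m F oo fps_X ^ p))"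
  using assms
proof (induction m)
  case 0 thus ?case using p_gt_1 by (simp add: p_dvd_fps_def power_0_left)
next
  case (Suc m)
  define a c where "a = fps_cutoff m F" and "c = F $ m"
  define b where "b = fps_const c * fps_X ^ m"
  have c: "c \<in> Zp p" using Suc.prems c_def by simp
  have ia: "Zp_fps a" unfolding a_def using Suc.prems by (intro Zp_fps_cutoff) simp
  have ib: "Zp_fps b" unfolding b_def using c by (intro Zp_fps_mult Zp_fps_const Zp_fps_X_power)
  have IH: "p_dvd_fps (a ^ p - (a oo fps_X ^ p))" unfolding a_def using Suc by simp
  have bp: "b ^ p = fps_const (c ^ p) * fps_X ^ (m * p)"
    unfolding b_def by (simp add: power_mult_distrib power_mult)
  have "(b ^ p - (b oo fps_X ^ p)) $ n = (if n = m * p then c ^ p - c else 0)" for n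
    unfolding fps_sub_nth fps_compose_X_power_nth[OF less_imp_le[OF p_gt_1]] bp
    using p_gt_1 by (auto simp: b_def)
  hence pb: "p_dvd_fps (b ^ p - (b oo fps_X ^ p))"
    unfolding p_dvd_fps_def using pow_dvd_1_power_p_minus_self[OF c] by simp
  have "fps_cutoff (Suc m) F ^ p - (fps_cutoff (Suc m) F oo fps_X ^ p)
      = ((a + b) ^ p - a ^ p - b ^ p) + (a ^ p - (a oo fps_X ^ p)) + (b ^ p - (b oo fps_X ^ p))"
    unfolding fps_cutoff_Suc a_def[symmetric] c_def[symmetric] b_def[symmetric]
      fps_compose_add_distrib
    by (simp add: algebra_simps)
  thus ?case by (metis p_dvd_fps_add p_dvd_fps_add_power_p ia ib IH pb)
qed

lemma AH_log_compose_X_power_p: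
  "AH_log p oo fps_X ^ p = of_nat p * AH_log p - fps_const (of_nat p) * fps_X"
proof (rule fps_ext)
  fix n
  have "(of_nat p * AH_log p - fps_const (of_nat p) * fps_X) $ n
      = of_nat p * AH_log p $ n - (if n = 1 then of_nat p else 0)"
    by (simp add: fps_of_nat_mult_nth)
  moreover have "(if p dvd n then AH_log p $ (n div p) else 0)
      = of_nat p * AH_log p $ n - (if n = 1 then of_nat p else 0)"
  proof (cases "\<exists>i. n = p ^ i")
    case True
    then obtain i where i: "n = p ^ i" by blast
    show ?thesis
    proof (cases i)
      case 0
      thus ?thesis using i p_gt_1 AH_log_nth_power[of 0] by simp
    next
      case (Suc i')
      have "n \<noteq> 1" "p dvd n" "n div p = p ^ i'" using i Suc p_gt_1 by auto
      thus ?thesis unfolding i Suc using p_gt_1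
        by (simp del: power_Suc of_nat_power add: AH_log_nth_power) (simp add: field_simps)
    qed
  next
    case False
    moreover have "n \<noteq> 1" using False by (metis power_0)
    ultimately show ?thesis by (simp add: AH_log_nth_not_power AH_log_nth_div_p_not_power)
  qed
  ultimately show "(AH_log p oo fps_X ^ p) $ n
      = (of_nat p * AH_log p - fps_const (of_nat p) * fps_X) $ n"
    using p_gt_1 by (simp add: fps_compose_X_power_nth)
qed

lemma artin_hasse_compose_X_power_p:
  "artin_hasse p oo fps_X ^ p = artin_hasse p ^ p * fps_exp (- of_nat p)"
proof -
  have X0: "(fps_X ^ p :: rat fps) $ 0 = 0" using p_gt_1 by simp
  have "artin_hasse p oo fps_X ^ p = fps_exp 1 oo (AH_log p oo fps_X ^ p)"
    unfolding artin_hasse_def by (rule fps_compose_assoc[OF X0 AH_log_nth_0, symmetric])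
  also have "\<dots> = (fps_exp 1 oo (of_nat p * AH_log p))
      * (fps_exp 1 oo (fps_const (- of_nat p) * fps_X))"
    unfolding AH_log_compose_X_power_p diff_conv_add_uminus fps_const_neg[symmetric] mult_minus_left
    by (rule fps_exp_compose_add) (simp_all add: fps_of_nat_mult_nth AH_log_nth_0)
  also have "\<dots> = artin_hasse p ^ p * fps_exp (- of_nat p)"
    unfolding fps_exp_compose_of_nat_mult[OF AH_log_nth_0] artin_hasse_def by simp
  finally show ?thesis .
qed

lemma p_dvd_fps_exp_minus_p: "p_dvd_fps (fps_exp (- of_nat p) - 1)"
  unfolding p_dvd_fps_def
proof
  fix j
  show "pow_dvd 1 ((fps_exp (- of_nat p) - 1) $ j)"
  proof (cases j)
    case (Suc j')
    have "(fps_exp (- of_nat p) - 1) $ j = (- of_nat p :: rat) ^ j / fact j"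
      using Suc by (simp del: fact_Suc)
    also have "\<dots> = of_nat p * ((-1) ^ j * (of_nat p ^ (j - 1) / fact j))"
      unfolding Suc power_minus[of "of_nat p :: rat"] by (simp add: mult_ac)
    also have "pow_dvd 1 \<dots>"
    proof (rule pow_dvd_1_p_mult, rule Zp_mult)
      show "(-1 :: rat) ^ j \<in> Zp p" by (intro Zp_power Zp_uminus Zp_1)
      show "of_nat p ^ (j - 1) / fact j \<in> Zp p" using Zp_p_power_divide_fact[of j] Suc by simp
    qed
    finally show ?thesis .
  qed simp
qed

text \<open>Induction on \<open>n\<close>: with \<open>F\<close> the truncation of \<open>E = E\<^sub>p\<close> below degree \<open>n\<close>, the
  coefficient of \<open>t\<^sup>n\<close> in \<open>E(t\<^sup>p) = E(t)\<^sup>p e\<^bsup>-pt\<^esup>\<close> gives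
  \<open>p E\<^sub>n = F(t\<^sup>p)\<^sub>n - (F(t)\<^sup>p e\<^bsup>-pt\<^esup>)\<^sub>n\<close>, which is divisible by \<open>p\<close>.\<close>
lemma artin_hasse_nth_Zp: "artin_hasse p $ n \<in> Zp p"
proof (induction n rule: less_induct)
  case (less n)
  define E G where "E = artin_hasse p" and "G = (fps_exp (- of_nat p) :: rat fps)"
  define F where "F = fps_cutoff n E"
  have E0: "E $ 0 = 1" by (simp add: E_def artin_hasse_def)
  show ?case
  proof (cases "n = 0")
    case True thus ?thesis using E0 by (simp add: E_def)
  next
    case False
    have "(E ^ p - F ^ p) $ j = 0" if "j < n" for j
      using fps_power_nth_cutoff(1)[OF E0, of n j p] False that by (simp add: F_def)
    hence "(G * (E ^ p - F ^ p)) $ n = G $ 0 * (E ^ p - F ^ p) $ n"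
      by (intro fps_mult_nth_at)
    also have "\<dots> = of_nat p * E $ n"
      using fps_power_nth_cutoff(2)[OF E0, of n p] False by (simp add: F_def G_def)
    finally have "(E ^ p * G) $ n = (F ^ p * G) $ n + of_nat p * E $ n"
      by (simp only: right_diff_distrib fps_sub_nth mult.commute[of G] eq_diff_eq add.commute)
    moreover have "(E ^ p * G) $ n = (F oo fps_X ^ p) $ n"
      unfolding E_def G_def artin_hasse_compose_X_power_p[symmetric] F_def E_def
      using False p_gt_1 by (simp add: fps_compose_X_power_nth)
    ultimately have eq: "of_nat p * E $ n = (- (F ^ p - (F oo fps_X ^ p)) - F ^ p * (G - 1)) $ n"
      by (simp add: algebra_simps)
    have "Zp_fps F" unfolding F_def E_def by (intro Zp_fps_cutoff less.IH)
    hence "p_dvd_fps (- (F ^ p - (F oo fps_X ^ p)) - F ^ p * (G - 1))"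
      unfolding F_def E_def G_def
      by (intro p_dvd_fps_diff p_dvd_fps_uminus p_dvd_fps_cutoff_power_p_minus_compose
          p_dvd_fps_mult Zp_fps_power p_dvd_fps_exp_minus_p less.IH)
    hence "pow_dvd 1 (of_nat p * E $ n)" unfolding p_dvd_fps_def eq by blast
    thus ?thesis unfolding E_def by (rule Zp_if_pow_dvd_1_p_mult)
  qed
qed

lemma Zp_fps_zvar: "Zp_fps zvar"
  unfolding zvar_def by (intro Zp_fps_diff Zp_fps_1) (simp add: Zp_fps_def)

definition Zp_fps2 :: "rat fps fps \<Rightarrow> bool" where
  "Zp_fps2 T \<longleftrightarrow> (\<forall>i. Zp_fps (T $ i))"

lemma Zp_fps2_mult: "Zp_fps2 S \<Longrightarrow> Zp_fps2 T \<Longrightarrow> Zp_fps2 (S * T)"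
  unfolding Zp_fps2_def fps_mult_nth by (auto intro!: Zp_fps_sum Zp_fps_mult)

lemma Zp_fps2_subst_tm_artin_hasse:
  assumes "Zp_fps c" shows "Zp_fps2 (subst_tm (artin_hasse p) c m)"
  unfolding Zp_fps2_def subst_tm_nth using assms
  by (auto intro!: Zp_fps_mult Zp_fps_const Zp_fps_power artin_hasse_nth_Zp simp: Zp_fps_def[of 0])

lemma Zp_fps2_inverse:
  assumes F0: "F $ 0 = 1" and F: "Zp_fps2 F"
  shows "Zp_fps2 (inverse F)"
proof -
  define U where "U = inverse F"
  have FU: "F * U = 1" unfolding U_def by (rule fps_mult_inverse_eq_1[OF F0])
  have "Zp_fps (U $ n)" for n
  proof (induction n rule: less_induct)
    case (less n)
    show ?case
    proof (cases n)
      case 0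
      have "U $ 0 = 1" using arg_cong[OF FU, of "\<lambda>G. G $ 0"] F0 by simp
      thus ?thesis using 0 Zp_fps_1 by simp
    next
      case (Suc m)
      have "(\<Sum>a=0..n. F $ a * U $ (n - a)) = 0"
        using arg_cong[OF FU, of "\<lambda>G. G $ n"] Suc by (simp add: fps_mult_nth)
      hence "U $ n = - (\<Sum>a=1..n. F $ a * U $ (n - a))"
        using F0 by (simp add: sum.atLeast_Suc_atMost[of 0 n] eq_neg_iff_add_eq_0)
      moreover have "Zp_fps (\<Sum>a=1..n. F $ a * U $ (n - a))"
        using F less Suc by (intro Zp_fps_sum Zp_fps_mult) (auto simp: Zp_fps2_def)
      ultimately show ?thesis by (auto simp: Zp_fps_def)
    qed
  qed
  thus ?thesis unfolding Zp_fps2_def U_def by blast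
qed

lemma Zp_fps2_f_AH: "Zp_fps2 (f_AH p)"
  unfolding f_AH_def
  by (intro Zp_fps2_mult Zp_fps2_inverse Zp_fps2_subst_tm_artin_hasse Zp_fps_zvar Zp_fps_1)
    (simp add: subst_tm_nth_0 artin_hasse_def)

text \<open>The quotient \<open>(T - V)/(t - 1)\<close> has \<open>t\<^sup>i\<close>-coefficient \<open>V - \<Sum>\<^bsub>m\<le>i\<^esub> T\<^sub>m\<close>.\<close>
lemma Zp_tate_decomposition:
  assumes "Zp_fps2 T" "Zp_fps V" "p_sums_at_1 T V"
  shows "\<exists>g. in_Zp_tate_pow p g \<and> T = fps_const V + (fps_X - 1) * g"
proof -
  define g where "g = - ((T - fps_const V) * Abs_fps (\<lambda>_. 1))"
  have "(fps_X - 1) * g = - ((fps_X - 1) * Abs_fps (\<lambda>_. 1)) * (T - fps_const V)"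
    unfolding g_def by (simp add: mult_ac)
  also have "\<dots> = T - fps_const V" unfolding fps_X_minus_1_mult_ones by simp
  finally have eq: "T = fps_const V + (fps_X - 1) * g" by simp
  have gij: "g $ i $ j = - ((\<Sum>m\<le>i. inner_coeff T j $ m) - V $ j)" for i j
    unfolding g_def fps_neg_nth fps_mult_ones_nth
    by (simp add: fps_sum_nth sum_subtractf sum.atMost_shift)
  have "in_Zp_tate_pow p g"
    unfolding in_Zp_tate_pow_def
  proof (intro conjI allI)
    fix i j show "g $ i $ j \<in> Zp p"
      unfolding gij using assms(1,2) by (auto simp: Zp_fps2_def Zp_fps_def)
  next
    fix j k
    have "\<forall>\<^sub>F i in sequentially. pow_dvd k ((\<Sum>m\<le>i. inner_coeff T j $ m) - V $ j)"
      using assms(3) unfolding p_sums_at_1_def p_sums_def by blast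
    thus "\<forall>\<^sub>F i in sequentially. \<exists>r\<in>Zp p. g $ i $ j = of_nat (p ^ k) * r"
      unfolding gij pow_dvd_def[symmetric] by (rule eventually_mono) (rule pow_dvd_uminus)
  qed
  thus ?thesis using eq by blast
qed

end

theorem lemma9p4:
  fixes p :: nat
  assumes "prime p"
  shows "\<exists>g. in_Zp_tate_pow p g \<and>
           f_AH p = fps_const zvar + (fps_X - 1) * g"
proof -
  interpret padic p using assms by unfold_locales
  have "p_sums_at_1 (f_AH p) zvar"
    unfolding f_AH_eq_w_exp_log_f by (rule p_sums_at_1_w_exp_log_f)
  with Zp_fps2_f_AH Zp_fps_zvar show ?thesis by (rule Zp_tate_decomposition)
qed

end
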